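(* For all formulas $A,B$ of bilattice logic, if $A\vdash B$ is derivable in BL, then the sequent $t_1(A)\vdash t_1(B)$ is derivable in D.BL; and for all formulas $A,B$ of bilattice logic with conflation, if $A\vdash B$ is derivable in CBL, then $t_1(A)\vdash t_1(B)$ is derivable in D.CBL.
   Context: Bilattice logic BL. Formulas over countably many atoms: $A::=p\mid \mathtt{t}\mid\mathtt{f}\mid\top\mid\bot\mid\neg A\mid A\wedge A\mid A\vee A\mid A\otimes A\mid A\oplus A$ (for CBL also $-A$). BL derives sequents $A\vdash B$ from the axioms $A\vdash A$; $\neg\neg A\vdash A$ and $A\vdash\neg\neg A$; $\mathtt{f}\vdash A$; $A\vdash\mathtt{t}$; $\bot\vdash A$; $A\vdash\top$; $A\vdash\neg\mathtt{f}$; $\neg\mathtt{t}\vdash A$; $\neg\bot\vdash A$; $A\vdash\neg\top$; $A\wedge B\vdash A$; $A\wedge B\vdash B$; $A\vdash A\vee B$; $B\vdash A\vee B$; $A\otimes B\vdash A$; $A\otimes B\vdash B$; $A\vdash A\oplus B$; $B\vdash A\oplus B$; $A\wedge(B\vee C)\vdash(A\wedge B)\vee(A\wedge C)$; $A\otimes(B\oplus C)\vdash(A\otimes B)\vee(A\oplus C)$; and both directions of $\neg(A\wedge B)\dashv\vdash\neg A\vee\neg B$, $\neg(A\vee B)\dashv\vdash\neg A\wedge\neg B$, $\neg(A\otimes B)\dashv\vdash\neg A\otimes\neg B$, $\neg(A\oplus B)\dashv\vdash\neg A\oplus\neg B$; using the rules: from $A\vdash B$ and $B\vdash C$ infer $A\vdash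 C$; from $A\vdash B$ and $A\vdash C$ infer $A\vdash B\wedge C$ and $A\vdash B\otimes C$; from $A\vdash B$ and $C\vdash B$ infer $A\vee C\vdash B$ and $A\oplus C\vdash B$. CBL is BL plus the axioms (both directions where $\dashv\vdash$) $--A\dashv\vdash A$, $-\neg A\dashv\vdash\neg-A$, $-\mathtt{f}\vdash A$, $A\vdash-\mathtt{t}$, $-\top\vdash A$, $A\vdash-\bot$, $-(A\wedge B)\dashv\vdash-A\wedge-B$, $-(A\vee B)\dashv\vdash-A\vee-B$, $-(A\otimes B)\dashv\vdash-A\oplus-B$, $-(A\oplus B)\dashv\vdash-A\otimes-B$. Translation: $t_1,t_2$ map BL/CBL formulas to type-1/type-2 formulas of D.BL/D.CBL: $t_1(p)=p_1$, $t_2(p)=p_2$; $t_1(\mathtt{t})=1_1,t_2(\mathtt{t})=0_2$; $t_1(\mathtt{f})=0_1,t_2(\mathtt{f})=1_2$; $t_1(\top)=1_1,t_2(\top)=1_2$; $t_1(\bot)=0_1,t_2(\bot)=0_2$; $t_1(A\wedge B)=t_1A\sqcap_1t_1B$, $t_2(A\wedge B)=t_2A\sqcup_2t_2B$; $t_1(A\vee B)=t_1A\sqcup_1t_1B$, $t_2(A\vee B)=t_2A\sqcap_2t_2B$; $t_1(A\otimes B)=t_1A\sqcap_1t_1B$, $t_2(A\otimes B)=t_2A\sqcap_2t_2B$; $t_1(A\oplus B)=t_1A\sqcup_1t_1B$, $t_2(A\oplus B)=t_2A\sqcup_2t_2B$; $t_1(\neg A)=\mathrm{p}\,t_2(A)$,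 $t_2(\neg A)=\mathrm{n}\,t_1(A)$; $t_1(-A)=\mathrm{p}{\sim}_2t_2(A)$, $t_2(-A)=\mathrm{n}{\sim}_1t_1(A)$. Calculus D.BL. Two types $1,2$; type-$i$ atoms $p_i,q_i,\dots$. Type-1 formulas: $A_1::=p_1\mid 1_1\mid 0_1\mid \mathrm{p}A_2\mid A_1\sqcap_1A_1\mid A_1\sqcup_1A_1$; type-2 formulas: $A_2::=p_2\mid 1_2\mid 0_2\mid \mathrm{n}A_1\mid A_2\sqcap_2A_2\mid A_2\sqcup_2A_2$. Type-1 structures: $X_1::=A_1\mid \hat1_1\mid\check0_1\mid \mathrm{P}X_2\mid X_1\hat\sqcap_1X_1\mid X_1\check\sqcup_1X_1\mid X_1\check\sqsupset_1X_1\mid X_1\hat\sqsubset_1X_1$; type-2 structures analogously with index 2 and $\mathrm{N}X_1$ instead of $\mathrm{P}X_2$. Sequents $X_i\vdash Y_i$ have both sides of the same type. Rules (for $i\in\{1,2\}$; "$\Leftrightarrow$" = both directions): Display: $X\hat\sqcap_iY\vdash Z\Leftrightarrow X\vdash Y\check\sqsupset_iZ$; $X\vdash Y\check\sqcup_iZ\Leftrightarrow X\hat\sqsubset_iY\vdash Z$; $\mathrm{P}X_2\vdash Y_1\Leftrightarrow X_2\vdash \mathrm{N}Y_1$; $\mathrm{N}X_1\vdash Y_2\Leftrightarrow X_1\vdash\mathrm{P}Y_2$. Identity $p_i\vdash p_i$; Cut: from $X\vdash A$ and $A\vdash Y$ infer $X\vdash Y$. Structural: from $X\hat\sqcap_i\hat1_i\vdash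 Y$ infer $X\vdash Y$; from $X\vdash Y\check\sqcup_i\check0_i$ infer $X\vdash Y$; exchange (from $X\hat\sqcap_iY\vdash Z$ infer $Y\hat\sqcap_iX\vdash Z$; from $X\vdash Y\check\sqcup_iZ$ infer $X\vdash Z\check\sqcup_iY$); associativity (from $(X\hat\sqcap_iY)\hat\sqcap_iZ\vdash W$ infer $X\hat\sqcap_i(Y\hat\sqcap_iZ)\vdash W$; from $X\vdash(Y\check\sqcup_iZ)\check\sqcup_iW$ infer $X\vdash Y\check\sqcup_i(Z\check\sqcup_iW)$); weakening (from $X\vdash Z$ infer $X\hat\sqcap_iY\vdash Z$; from $X\vdash Y$ infer $X\vdash Y\check\sqcup_iZ$); contraction (from $X\hat\sqcap_iX\vdash Z$ infer $X\vdash Z$; from $X\vdash Y\check\sqcup_iY$ infer $X\vdash Y$). Operational: from $\hat1_i\vdash X$ infer $1_i\vdash X$; axiom $\hat1_i\vdash1_i$; axiom $0_i\vdash\check0_i$; from $X\vdash\check0_i$ infer $X\vdash0_i$; from $A\hat\sqcap_iB\vdash X$ infer $A\sqcap_iB\vdash X$; from $X\vdash A$ and $Y\vdash B$ infer $X\hat\sqcap_iY\vdash A\sqcap_iB$; from $A\vdash X$ and $B\vdash Y$ infer $A\sqcup_iB\vdash X\check\sqcup_iY$; from $X\vdash A\check\sqcup_iB$ infer $X\vdash A\sqcup_iB$. Multi-type structural: $X_1\vdash Y_1\Leftrightarrow\mathrm{N}X_1\vdash\mathrm{N}Y_1$; $X_2\vdash Y_2\Leftrightarrow\mathrm{P}X_2\vdash\mathrm{P}Y_2$;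 from $\check0_1\vdash X_1$ infer $\mathrm{P}\check0_2\vdash X_1$; from $X_1\vdash\hat1_1$ infer $X_1\vdash\mathrm{P}\hat1_2$. Multi-type operational: from $\mathrm{N}A_1\vdash X_2$ infer $\mathrm{n}A_1\vdash X_2$; from $X_2\vdash\mathrm{N}A_1$ infer $X_2\vdash\mathrm{n}A_1$; from $\mathrm{P}A_2\vdash X_1$ infer $\mathrm{p}A_2\vdash X_1$; from $X_1\vdash\mathrm{P}A_2$ infer $X_1\vdash\mathrm{p}A_2$. D.CBL adds formulas ${\sim}_iA_i$, structures $\ast_iX_i$, and rules: $\ast_iX\vdash Y\Leftrightarrow\ast_iY\vdash X$; $X\vdash\ast_iY\Leftrightarrow Y\vdash\ast_iX$; $X\vdash Y\Leftrightarrow\ast_iY\vdash\ast_iX$; from $\mathrm{N}\ast_1X_1\vdash Y_2$ infer $\ast_2\mathrm{N}X_1\vdash Y_2$; from $X_2\vdash\mathrm{N}\ast_1Y_1$ infer $X_2\vdash\ast_2\mathrm{N}Y_1$; from $\ast_iA\vdash Y$ infer ${\sim}_iA\vdash Y$; from $X\vdash\ast_iA$ infer $X\vdash{\sim}_iA$. A formula is regarded as a structure. *)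

theory Defs
  imports Main
begin

datatype fm =
    Atom nat
  | TT
  | FF
  | Top
  | Bot
  | Neg fm
  | Conj fm fm
  | Disj fm fm
  | Otimes fm fm
  | Oplus fm fm
  | Conf fm

fun no_conf :: "fm \<Rightarrow> bool" where
  "no_conf (Atom p) = True"
| "no_conf TT = True"
| "no_conf FF = True"
| "no_conf Top = True"
| "no_conf Bot = True"
| "no_conf (Neg A) = no_conf A"
| "no_conf (Conj A B) = (no_conf A \<and> no_conf B)"
| "no_conf (Disj A B) = (no_conf A \<and> no_conf B)"
| "no_conf (Otimes A B) = (no_conf A \<and> no_conf B)"
| "no_conf (Oplus A B) = (no_conf A \<and> no_conf B)"
| "no_conf (Conf A) = False"

text \<open>A formula belongs to the language: of BL (c = False) or of CBL (c = True).\<close>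
definition lang :: "bool \<Rightarrow> fm \<Rightarrow> bool" where
  "lang c A \<longleftrightarrow> c \<or> no_conf A"

inductive deriv :: "bool \<Rightarrow> fm \<Rightarrow> fm \<Rightarrow> bool" for c where
  ax_id: "lang c A \<Longrightarrow> deriv c A A"
| ax_nn1: "lang c A \<Longrightarrow> deriv c (Neg (Neg A)) A"
| ax_nn2: "lang c A \<Longrightarrow> deriv c A (Neg (Neg A))"
| ax_f: "lang c A \<Longrightarrow> deriv c FF A"
| ax_t: "lang c A \<Longrightarrow> deriv c A TT"
| ax_bot: "lang c A \<Longrightarrow> deriv c Bot A"
| ax_top: "lang c A \<Longrightarrow> deriv c A Top"
| ax_negf: "lang c A \<Longrightarrow> deriv c A (Neg FF)"
| ax_negt: "lang c A \<Longrightarrow> deriv c (Neg TT) A"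
| ax_negbot: "lang c A \<Longrightarrow> deriv c (Neg Bot) A"
| ax_negtop: "lang c A \<Longrightarrow> deriv c A (Neg Top)"
| ax_conj1: "lang c A \<Longrightarrow> lang c B \<Longrightarrow> deriv c (Conj A B) A"
| ax_conj2: "lang c A \<Longrightarrow> lang c B \<Longrightarrow> deriv c (Conj A B) B"
| ax_disj1: "lang c A \<Longrightarrow> lang c B \<Longrightarrow> deriv c A (Disj A B)"
| ax_disj2: "lang c A \<Longrightarrow> lang c B \<Longrightarrow> deriv c B (Disj A B)"
| ax_otimes1: "lang c A \<Longrightarrow> lang c B \<Longrightarrow> deriv c (Otimes A B) A"
| ax_otimes2: "lang c A \<Longrightarrow> lang c B \<Longrightarrow> deriv c (Otimes A B) B"
| ax_oplus1: "lang c A \<Longrightarrow> lang c B \<Longrightarrow> deriv c A (Oplus A B)"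
| ax_oplus2: "lang c A \<Longrightarrow> lang c B \<Longrightarrow> deriv c B (Oplus A B)"
| ax_distr_t: "lang c A \<Longrightarrow> lang c B \<Longrightarrow> lang c C \<Longrightarrow>
    deriv c (Conj A (Disj B C)) (Disj (Conj A B) (Conj A C))"
| ax_distr_k: "lang c A \<Longrightarrow> lang c B \<Longrightarrow> lang c C \<Longrightarrow>
    deriv c (Otimes A (Oplus B C)) (Disj (Otimes A B) (Oplus A C))"
| ax_dm_conj1: "lang c A \<Longrightarrow> lang c B \<Longrightarrow> deriv c (Neg (Conj A B)) (Disj (Neg A) (Neg B))"
| ax_dm_conj2: "lang c A \<Longrightarrow> lang c B \<Longrightarrow> deriv c (Disj (Neg A) (Neg B)) (Neg (Conj A B))"
| ax_dm_disj1: "lang c A \<Longrightarrow> lang c B \<Longrightarrow> deriv c (Neg (Disj A B)) (Conj (Neg A) (Neg B))"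
| ax_dm_disj2: "lang c A \<Longrightarrow> lang c B \<Longrightarrow> deriv c (Conj (Neg A) (Neg B)) (Neg (Disj A B))"
| ax_dm_otimes1: "lang c A \<Longrightarrow> lang c B \<Longrightarrow> deriv c (Neg (Otimes A B)) (Otimes (Neg A) (Neg B))"
| ax_dm_otimes2: "lang c A \<Longrightarrow> lang c B \<Longrightarrow> deriv c (Otimes (Neg A) (Neg B)) (Neg (Otimes A B))"
| ax_dm_oplus1: "lang c A \<Longrightarrow> lang c B \<Longrightarrow> deriv c (Neg (Oplus A B)) (Oplus (Neg A) (Neg B))"
| ax_dm_oplus2: "lang c A \<Longrightarrow> lang c B \<Longrightarrow> deriv c (Oplus (Neg A) (Neg B)) (Neg (Oplus A B))"
| cut: "deriv c A B \<Longrightarrow> deriv c B C \<Longrightarrow> deriv c A C"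
| conj_R: "deriv c A B \<Longrightarrow> deriv c A C \<Longrightarrow> deriv c A (Conj B C)"
| otimes_R: "deriv c A B \<Longrightarrow> deriv c A C \<Longrightarrow> deriv c A (Otimes B C)"
| disj_L: "deriv c A B \<Longrightarrow> deriv c C B \<Longrightarrow> deriv c (Disj A C) B"
| oplus_L: "deriv c A B \<Longrightarrow> deriv c C B \<Longrightarrow> deriv c (Oplus A C) B"
| cx_cc1: "c \<Longrightarrow> deriv c (Conf (Conf A)) A"
| cx_cc2: "c \<Longrightarrow> deriv c A (Conf (Conf A))"
| cx_cn1: "c \<Longrightarrow> deriv c (Conf (Neg A)) (Neg (Conf A))"
| cx_cn2: "c \<Longrightarrow> deriv c (Neg (Conf A)) (Conf (Neg A))"
| cx_f: "c \<Longrightarrow> deriv c (Conf FF) A"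
| cx_t: "c \<Longrightarrow> deriv c A (Conf TT)"
| cx_top: "c \<Longrightarrow> deriv c (Conf Top) A"
| cx_bot: "c \<Longrightarrow> deriv c A (Conf Bot)"
| cx_conj1: "c \<Longrightarrow> deriv c (Conf (Conj A B)) (Conj (Conf A) (Conf B))"
| cx_conj2: "c \<Longrightarrow> deriv c (Conj (Conf A) (Conf B)) (Conf (Conj A B))"
| cx_disj1: "c \<Longrightarrow> deriv c (Conf (Disj A B)) (Disj (Conf A) (Conf B))"
| cx_disj2: "c \<Longrightarrow> deriv c (Disj (Conf A) (Conf B)) (Conf (Disj A B))"
| cx_otimes1: "c \<Longrightarrow> deriv c (Conf (Otimes A B)) (Oplus (Conf A) (Conf B))"
| cx_otimes2: "c \<Longrightarrow> deriv c (Oplus (Conf A) (Conf B)) (Conf (Otimes A B))"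
| cx_oplus1: "c \<Longrightarrow> deriv c (Conf (Oplus A B)) (Otimes (Conf A) (Conf B))"
| cx_oplus2: "c \<Longrightarrow> deriv c (Otimes (Conf A) (Conf B)) (Conf (Oplus A B))"

abbreviation BL_der :: "fm \<Rightarrow> fm \<Rightarrow> bool" where "BL_der \<equiv> deriv False"
abbreviation CBL_der :: "fm \<Rightarrow> fm \<Rightarrow> bool" where "CBL_der \<equiv> deriv True"

datatype fm1 =
    At1 nat | One1 | Zero1 | Pf fm2 | Meet1 fm1 fm1 | Join1 fm1 fm1 | Tl1 fm1
and fm2 =
    At2 nat | One2 | Zero2 | Nf fm1 | Meet2 fm2 fm2 | Join2 fm2 fm2 | Tl2 fm2

text \<open>Structures.  SMeet = hat-meet, SJoin = check-join, SImp X Z = X check-sqsupset Z,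
  SSub X Y = X hat-sqsubset Y, SStar = *.\<close>
datatype st1 =
    F1 fm1 | SOne1 | SZero1 | SP st2 | SMeet1 st1 st1 | SJoin1 st1 st1
  | SImp1 st1 st1 | SSub1 st1 st1 | SStar1 st1
and st2 =
    F2 fm2 | SOne2 | SZero2 | SN st1 | SMeet2 st2 st2 | SJoin2 st2 st2
  | SImp2 st2 st2 | SSub2 st2 st2 | SStar2 st2

fun nt_fm1 :: "fm1 \<Rightarrow> bool" and nt_fm2 :: "fm2 \<Rightarrow> bool" where
  "nt_fm1 (At1 p) = True" | "nt_fm1 One1 = True" | "nt_fm1 Zero1 = True"
| "nt_fm1 (Pf A) = nt_fm2 A" | "nt_fm1 (Meet1 A B) = (nt_fm1 A \<and> nt_fm1 B)"
| "nt_fm1 (Join1 A B) = (nt_fm1 A \<and> nt_fm1 B)" | "nt_fm1 (Tl1 A) = False"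
| "nt_fm2 (At2 p) = True" | "nt_fm2 One2 = True" | "nt_fm2 Zero2 = True"
| "nt_fm2 (Nf A) = nt_fm1 A" | "nt_fm2 (Meet2 A B) = (nt_fm2 A \<and> nt_fm2 B)"
| "nt_fm2 (Join2 A B) = (nt_fm2 A \<and> nt_fm2 B)" | "nt_fm2 (Tl2 A) = False"

fun nt_st1 :: "st1 \<Rightarrow> bool" and nt_st2 :: "st2 \<Rightarrow> bool" where
  "nt_st1 (F1 A) = nt_fm1 A" | "nt_st1 SOne1 = True" | "nt_st1 SZero1 = True"
| "nt_st1 (SP X) = nt_st2 X" | "nt_st1 (SMeet1 X Y) = (nt_st1 X \<and> nt_st1 Y)"
| "nt_st1 (SJoin1 X Y) = (nt_st1 X \<and> nt_st1 Y)" | "nt_st1 (SImp1 X Y) = (nt_st1 X \<and> nt_st1 Y)"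
| "nt_st1 (SSub1 X Y) = (nt_st1 X \<and> nt_st1 Y)" | "nt_st1 (SStar1 X) = False"
| "nt_st2 (F2 A) = nt_fm2 A" | "nt_st2 SOne2 = True" | "nt_st2 SZero2 = True"
| "nt_st2 (SN X) = nt_st1 X" | "nt_st2 (SMeet2 X Y) = (nt_st2 X \<and> nt_st2 Y)"
| "nt_st2 (SJoin2 X Y) = (nt_st2 X \<and> nt_st2 Y)" | "nt_st2 (SImp2 X Y) = (nt_st2 X \<and> nt_st2 Y)"
| "nt_st2 (SSub2 X Y) = (nt_st2 X \<and> nt_st2 Y)" | "nt_st2 (SStar2 X) = False"

definition dlang1 :: "bool \<Rightarrow> st1 \<Rightarrow> bool" where "dlang1 c X \<longleftrightarrow> c \<or> nt_st1 X"
definition dlang2 :: "bool \<Rightarrow> st2 \<Rightarrow> bool" where "dlang2 c X \<longleftrightarrow> c \<or> nt_st2 X"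

inductive d1 :: "bool \<Rightarrow> st1 \<Rightarrow> st1 \<Rightarrow> bool" and d2 :: "bool \<Rightarrow> st2 \<Rightarrow> st2 \<Rightarrow> bool" for c where
  dp_res1a: "d1 c (SMeet1 X Y) Z \<Longrightarrow> d1 c X (SImp1 Y Z)"
| dp_res1b: "d1 c X (SImp1 Y Z) \<Longrightarrow> d1 c (SMeet1 X Y) Z"
| dp_res2a: "d2 c (SMeet2 X Y) Z \<Longrightarrow> d2 c X (SImp2 Y Z)"
| dp_res2b: "d2 c X (SImp2 Y Z) \<Longrightarrow> d2 c (SMeet2 X Y) Z"
| dp_cores1a: "d1 c X (SJoin1 Y Z) \<Longrightarrow> d1 c (SSub1 X Y) Z"
| dp_cores1b: "d1 c (SSub1 X Y) Z \<Longrightarrow> d1 c X (SJoin1 Y Z)"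
| dp_cores2a: "d2 c X (SJoin2 Y Z) \<Longrightarrow> d2 c (SSub2 X Y) Z"
| dp_cores2b: "d2 c (SSub2 X Y) Z \<Longrightarrow> d2 c X (SJoin2 Y Z)"
| dp_PNa: "d1 c (SP X) Y \<Longrightarrow> d2 c X (SN Y)"
| dp_PNb: "d2 c X (SN Y) \<Longrightarrow> d1 c (SP X) Y"
| dp_NPa: "d2 c (SN X) Y \<Longrightarrow> d1 c X (SP Y)"
| dp_NPb: "d1 c X (SP Y) \<Longrightarrow> d2 c (SN X) Y"
| id1: "d1 c (F1 (At1 p)) (F1 (At1 p))"
| id2: "d2 c (F2 (At2 p)) (F2 (At2 p))"
| cut1: "d1 c X (F1 A) \<Longrightarrow> d1 c (F1 A) Y \<Longrightarrow> d1 c X Y"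
| cut2: "d2 c X (F2 A) \<Longrightarrow> d2 c (F2 A) Y \<Longrightarrow> d2 c X Y"
| unitL1: "d1 c (SMeet1 X SOne1) Y \<Longrightarrow> d1 c X Y"
| unitL2: "d2 c (SMeet2 X SOne2) Y \<Longrightarrow> d2 c X Y"
| unitR1: "d1 c X (SJoin1 Y SZero1) \<Longrightarrow> d1 c X Y"
| unitR2: "d2 c X (SJoin2 Y SZero2) \<Longrightarrow> d2 c X Y"
| exL1: "d1 c (SMeet1 X Y) Z \<Longrightarrow> d1 c (SMeet1 Y X) Z"
| exL2: "d2 c (SMeet2 X Y) Z \<Longrightarrow> d2 c (SMeet2 Y X) Z"
| exR1: "d1 c X (SJoin1 Y Z) \<Longrightarrow> d1 c X (SJoin1 Z Y)"
| exR2: "d2 c X (SJoin2 Y Z) \<Longrightarrow> d2 c X (SJoin2 Z Y)"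
| asL1: "d1 c (SMeet1 (SMeet1 X Y) Z) W \<Longrightarrow> d1 c (SMeet1 X (SMeet1 Y Z)) W"
| asL2: "d2 c (SMeet2 (SMeet2 X Y) Z) W \<Longrightarrow> d2 c (SMeet2 X (SMeet2 Y Z)) W"
| asR1: "d1 c X (SJoin1 (SJoin1 Y Z) W) \<Longrightarrow> d1 c X (SJoin1 Y (SJoin1 Z W))"
| asR2: "d2 c X (SJoin2 (SJoin2 Y Z) W) \<Longrightarrow> d2 c X (SJoin2 Y (SJoin2 Z W))"
| wL1: "dlang1 c Y \<Longrightarrow> d1 c X Z \<Longrightarrow> d1 c (SMeet1 X Y) Z"
| wL2: "dlang2 c Y \<Longrightarrow> d2 c X Z \<Longrightarrow> d2 c (SMeet2 X Y) Z"
| wR1: "dlang1 c Z \<Longrightarrow> d1 c X Y \<Longrightarrow> d1 c X (SJoin1 Y Z)"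
| wR2: "dlang2 c Z \<Longrightarrow> d2 c X Y \<Longrightarrow> d2 c X (SJoin2 Y Z)"
| cL1: "d1 c (SMeet1 X X) Z \<Longrightarrow> d1 c X Z"
| cL2: "d2 c (SMeet2 X X) Z \<Longrightarrow> d2 c X Z"
| cR1: "d1 c X (SJoin1 Y Y) \<Longrightarrow> d1 c X Y"
| cR2: "d2 c X (SJoin2 Y Y) \<Longrightarrow> d2 c X Y"
| oneL1: "d1 c SOne1 X \<Longrightarrow> d1 c (F1 One1) X"
| oneL2: "d2 c SOne2 X \<Longrightarrow> d2 c (F2 One2) X"
| oneR1: "d1 c SOne1 (F1 One1)"
| oneR2: "d2 c SOne2 (F2 One2)"
| zeroL1: "d1 c (F1 Zero1) SZero1"
| zeroL2: "d2 c (F2 Zero2) SZero2"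
| zeroR1: "d1 c X SZero1 \<Longrightarrow> d1 c X (F1 Zero1)"
| zeroR2: "d2 c X SZero2 \<Longrightarrow> d2 c X (F2 Zero2)"
| meetL1: "d1 c (SMeet1 (F1 A) (F1 B)) X \<Longrightarrow> d1 c (F1 (Meet1 A B)) X"
| meetL2: "d2 c (SMeet2 (F2 A) (F2 B)) X \<Longrightarrow> d2 c (F2 (Meet2 A B)) X"
| meetR1: "d1 c X (F1 A) \<Longrightarrow> d1 c Y (F1 B) \<Longrightarrow> d1 c (SMeet1 X Y) (F1 (Meet1 A B))"
| meetR2: "d2 c X (F2 A) \<Longrightarrow> d2 c Y (F2 B) \<Longrightarrow> d2 c (SMeet2 X Y) (F2 (Meet2 A B))"
| joinL1: "d1 c (F1 A) X \<Longrightarrow> d1 c (F1 B) Y \<Longrightarrow> d1 c (F1 (Join1 A B)) (SJoin1 X Y)"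
| joinL2: "d2 c (F2 A) X \<Longrightarrow> d2 c (F2 B) Y \<Longrightarrow> d2 c (F2 (Join2 A B)) (SJoin2 X Y)"
| joinR1: "d1 c X (SJoin1 (F1 A) (F1 B)) \<Longrightarrow> d1 c X (F1 (Join1 A B))"
| joinR2: "d2 c X (SJoin2 (F2 A) (F2 B)) \<Longrightarrow> d2 c X (F2 (Join2 A B))"
| mN_a: "d1 c X Y \<Longrightarrow> d2 c (SN X) (SN Y)"
| mN_b: "d2 c (SN X) (SN Y) \<Longrightarrow> d1 c X Y"
| mP_a: "d2 c X Y \<Longrightarrow> d1 c (SP X) (SP Y)"
| mP_b: "d1 c (SP X) (SP Y) \<Longrightarrow> d2 c X Y"
| mP_zero: "d1 c SZero1 X \<Longrightarrow> d1 c (SP SZero2) X"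
| mP_one: "d1 c X SOne1 \<Longrightarrow> d1 c X (SP SOne2)"
| nL: "d2 c (SN (F1 A)) X \<Longrightarrow> d2 c (F2 (Nf A)) X"
| nR: "d2 c X (SN (F1 A)) \<Longrightarrow> d2 c X (F2 (Nf A))"
| pL: "d1 c (SP (F2 A)) X \<Longrightarrow> d1 c (F1 (Pf A)) X"
| pR: "d1 c X (SP (F2 A)) \<Longrightarrow> d1 c X (F1 (Pf A))"
| stL1a: "c \<Longrightarrow> d1 c (SStar1 X) Y \<Longrightarrow> d1 c (SStar1 Y) X"
| stL2a: "c \<Longrightarrow> d2 c (SStar2 X) Y \<Longrightarrow> d2 c (SStar2 Y) X"
| stR1a: "c \<Longrightarrow> d1 c X (SStar1 Y) \<Longrightarrow> d1 c Y (SStar1 X)"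
| stR2a: "c \<Longrightarrow> d2 c X (SStar2 Y) \<Longrightarrow> d2 c Y (SStar2 X)"
| stC1a: "c \<Longrightarrow> d1 c X Y \<Longrightarrow> d1 c (SStar1 Y) (SStar1 X)"
| stC1b: "c \<Longrightarrow> d1 c (SStar1 Y) (SStar1 X) \<Longrightarrow> d1 c X Y"
| stC2a: "c \<Longrightarrow> d2 c X Y \<Longrightarrow> d2 c (SStar2 Y) (SStar2 X)"
| stC2b: "c \<Longrightarrow> d2 c (SStar2 Y) (SStar2 X) \<Longrightarrow> d2 c X Y"
| stNL: "c \<Longrightarrow> d2 c (SN (SStar1 X)) Y \<Longrightarrow> d2 c (SStar2 (SN X)) Y"
| stNR: "c \<Longrightarrow> d2 c X (SN (SStar1 Y)) \<Longrightarrow> d2 c X (SStar2 (SN Y))"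
| tlL1: "c \<Longrightarrow> d1 c (SStar1 (F1 A)) Y \<Longrightarrow> d1 c (F1 (Tl1 A)) Y"
| tlL2: "c \<Longrightarrow> d2 c (SStar2 (F2 A)) Y \<Longrightarrow> d2 c (F2 (Tl2 A)) Y"
| tlR1: "c \<Longrightarrow> d1 c X (SStar1 (F1 A)) \<Longrightarrow> d1 c X (F1 (Tl1 A))"
| tlR2: "c \<Longrightarrow> d2 c X (SStar2 (F2 A)) \<Longrightarrow> d2 c X (F2 (Tl2 A))"

abbreviation DBL1 :: "fm1 \<Rightarrow> fm1 \<Rightarrow> bool" where "DBL1 A B \<equiv> d1 False (F1 A) (F1 B)"
abbreviation DCBL1 :: "fm1 \<Rightarrow> fm1 \<Rightarrow> bool" where "DCBL1 A B \<equiv> d1 True (F1 A) (F1 B)"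

fun t1 :: "fm \<Rightarrow> fm1" and t2 :: "fm \<Rightarrow> fm2" where
  "t1 (Atom p) = At1 p" | "t2 (Atom p) = At2 p"
| "t1 TT = One1" | "t2 TT = Zero2"
| "t1 FF = Zero1" | "t2 FF = One2"
| "t1 Top = One1" | "t2 Top = One2"
| "t1 Bot = Zero1" | "t2 Bot = Zero2"
| "t1 (Conj A B) = Meet1 (t1 A) (t1 B)" | "t2 (Conj A B) = Join2 (t2 A) (t2 B)"
| "t1 (Disj A B) = Join1 (t1 A) (t1 B)" | "t2 (Disj A B) = Meet2 (t2 A) (t2 B)"
| "t1 (Otimes A B) = Meet1 (t1 A) (t1 B)" | "t2 (Otimes A B) = Meet2 (t2 A) (t2 B)"
| "t1 (Oplus A B) = Join1 (t1 A) (t1 B)" | "t2 (Oplus A B) = Join2 (t2 A) (t2 B)"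
| "t1 (Neg A) = Pf (t2 A)" | "t2 (Neg A) = Nf (t1 A)"
| "t1 (Conf A) = Pf (Tl2 (t2 A))" | "t2 (Conf A) = Nf (Tl1 (t1 A))"

end

theory Submission imports Defs begin

text \<open>The type-2 translation turns the truth
  order around, and the display postulates make \<open>p\<close> and \<open>n\<close> transport derivations between
  the two types; this is what turns the De Morgan laws into distributivity of \<open>p\<close>. Conflation
  is handled by the antitone involution \<open>\<sim>\<^sub>2\<close>, which swaps \<open>\<sqinter>\<^sub>2\<close> and \<open>\<squnion>\<^sub>2\<close>. The side
  conditions \<open>c \<or> nt_fm\<close> keep the weakened formulas free of \<open>\<sim>\<close> when \<open>c = False\<close>.\<close>

lemma nt_fm_t1_t2: "no_conf A \<Longrightarrow> nt_fm1 (t1 A) \<and> nt_fm2 (t2 A)"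
  by (induction A) auto

lemma lang_imp_nt_fm1_t1: "lang c A \<Longrightarrow> c \<or> nt_fm1 (t1 A)"
  and lang_imp_nt_fm2_t2: "lang c A \<Longrightarrow> c \<or> nt_fm2 (t2 A)"
  using nt_fm_t1_t2 unfolding lang_def by blast+

lemma d1_refl: "c \<or> nt_fm1 a \<Longrightarrow> d1 c (F1 a) (F1 a)"
  and d2_refl: "c \<or> nt_fm2 b \<Longrightarrow> d2 c (F2 b) (F2 b)"
proof (induction a and b)
  case One1 show ?case by (intro d1_d2.oneL1 d1_d2.oneR1)
next
  case Zero1 show ?case by (intro d1_d2.zeroR1 d1_d2.zeroL1)
next
  case One2 show ?case by (intro d1_d2.oneL2 d1_d2.oneR2)
next
  case Zero2 show ?case by (intro d1_d2.zeroR2 d1_d2.zeroL2)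
next
  case (Pf x) then show ?case by (intro d1_d2.pL d1_d2.pR d1_d2.mP_a) simp
next
  case (Nf x) then show ?case by (intro d1_d2.nL d1_d2.nR d1_d2.mN_a) simp
next
  case (Meet1 x y) then show ?case by (intro d1_d2.meetL1 d1_d2.meetR1) auto
next
  case (Meet2 x y) then show ?case by (intro d1_d2.meetL2 d1_d2.meetR2) auto
next
  case (Join1 x y) then show ?case by (intro d1_d2.joinL1 d1_d2.joinR1) auto
next
  case (Join2 x y) then show ?case by (intro d1_d2.joinL2 d1_d2.joinR2) auto
next
  case (Tl1 x) then show ?case by (intro d1_d2.tlL1 d1_d2.tlR1 d1_d2.stC1a) auto
next
  case (Tl2 x) then show ?case by (intro d1_d2.tlL2 d1_d2.tlR2 d1_d2.stC2a) auto
qed (intro d1_d2.id1 d1_d2.id2)+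

lemma d1_meet_right: "d1 c X (F1 a) \<Longrightarrow> d1 c X (F1 b) \<Longrightarrow> d1 c X (F1 (Meet1 a b))"
  by (rule d1_d2.cL1, rule d1_d2.meetR1)

lemma d2_meet_right: "d2 c X (F2 a) \<Longrightarrow> d2 c X (F2 b) \<Longrightarrow> d2 c X (F2 (Meet2 a b))"
  by (rule d1_d2.cL2, rule d1_d2.meetR2)

lemma d1_join_left: "d1 c (F1 a) X \<Longrightarrow> d1 c (F1 b) X \<Longrightarrow> d1 c (F1 (Join1 a b)) X"
  by (rule d1_d2.cR1, rule d1_d2.joinL1)

lemma d2_join_left: "d2 c (F2 a) X \<Longrightarrow> d2 c (F2 b) X \<Longrightarrow> d2 c (F2 (Join2 a b)) X"
  by (rule d1_d2.cR2, rule d1_d2.joinL2)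

lemma d1_meet_leftI1: "d1 c (F1 a) X \<Longrightarrow> c \<or> nt_fm1 b \<Longrightarrow> d1 c (F1 (Meet1 a b)) X"
  by (rule d1_d2.meetL1, rule d1_d2.wL1) (simp_all add: dlang1_def)

lemma d1_meet_leftI2: "d1 c (F1 b) X \<Longrightarrow> c \<or> nt_fm1 a \<Longrightarrow> d1 c (F1 (Meet1 a b)) X"
  by (rule d1_d2.meetL1, rule d1_d2.exL1, rule d1_d2.wL1) (simp_all add: dlang1_def)

lemma d2_meet_leftI1: "d2 c (F2 a) X \<Longrightarrow> c \<or> nt_fm2 b \<Longrightarrow> d2 c (F2 (Meet2 a b)) X"
  by (rule d1_d2.meetL2, rule d1_d2.wL2) (simp_all add: dlang2_def)

lemma d2_meet_leftI2: "d2 c (F2 b) X \<Longrightarrow> c \<or> nt_fm2 a \<Longrightarrow> d2 c (F2 (Meet2 a b)) X"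
  by (rule d1_d2.meetL2, rule d1_d2.exL2, rule d1_d2.wL2) (simp_all add: dlang2_def)

lemma d1_join_rightI1: "d1 c X (F1 a) \<Longrightarrow> c \<or> nt_fm1 b \<Longrightarrow> d1 c X (F1 (Join1 a b))"
  by (rule d1_d2.joinR1, rule d1_d2.wR1) (simp_all add: dlang1_def)

lemma d1_join_rightI2: "d1 c X (F1 b) \<Longrightarrow> c \<or> nt_fm1 a \<Longrightarrow> d1 c X (F1 (Join1 a b))"
  by (rule d1_d2.joinR1, rule d1_d2.exR1, rule d1_d2.wR1) (simp_all add: dlang1_def)

lemma d2_join_rightI1: "d2 c X (F2 a) \<Longrightarrow> c \<or> nt_fm2 b \<Longrightarrow> d2 c X (F2 (Join2 a b))"
  by (rule d1_d2.joinR2, rule d1_d2.wR2) (simp_all add: dlang2_def)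

lemma d2_join_rightI2: "d2 c X (F2 b) \<Longrightarrow> c \<or> nt_fm2 a \<Longrightarrow> d2 c X (F2 (Join2 a b))"
  by (rule d1_d2.joinR2, rule d1_d2.exR2, rule d1_d2.wR2) (simp_all add: dlang2_def)

lemma d1_one_right: "dlang1 c X \<Longrightarrow> d1 c X (F1 One1)"
  by (rule d1_d2.unitL1, rule d1_d2.exL1, rule d1_d2.wL1, assumption, rule d1_d2.oneR1)

lemma d2_one_right: "dlang2 c X \<Longrightarrow> d2 c X (F2 One2)"
  by (rule d1_d2.unitL2, rule d1_d2.exL2, rule d1_d2.wL2, assumption, rule d1_d2.oneR2)

lemma d1_zero_left: "dlang1 c X \<Longrightarrow> d1 c (F1 Zero1) X"
  by (rule d1_d2.unitR1, rule d1_d2.exR1, rule d1_d2.wR1, assumption, rule d1_d2.zeroL1)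

lemma d2_zero_left: "dlang2 c X \<Longrightarrow> d2 c (F2 Zero2) X"
  by (rule d1_d2.unitR2, rule d1_d2.exR2, rule d1_d2.wR2, assumption, rule d1_d2.zeroL2)

lemma d1_Meet1_Join1_distrib:
  assumes "d1 c (SMeet1 (F1 a) (F1 b)) X" and "d1 c (SMeet1 (F1 a) (F1 e)) X"
  shows "d1 c (F1 (Meet1 a (Join1 b e))) X"
proof -
  \<comment> \<open>residuation moves the context \<open>a\<close> to the right, so \<open>b \<squnion>\<^sub>1 e\<close> can be split on the left\<close>
  have "d1 c (F1 b) (SImp1 (F1 a) X)" and "d1 c (F1 e) (SImp1 (F1 a) X)"
    by (rule d1_d2.dp_res1a, rule d1_d2.exL1, rule assms)+
  then have "d1 c (F1 (Join1 b e)) (SImp1 (F1 a) X)"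
    by (rule d1_join_left)
  then show ?thesis
    by (rule d1_d2.meetL1[OF d1_d2.exL1[OF d1_d2.dp_res1b]])
qed

lemma d1_SMeet1_Meet1:
  "c \<or> nt_fm1 a \<Longrightarrow> c \<or> nt_fm1 b \<Longrightarrow> d1 c (SMeet1 (F1 a) (F1 b)) (F1 (Meet1 a b))"
  by (intro d1_d2.meetR1 d1_refl)

lemma d1_truth_distrib:
  assumes "c \<or> nt_fm1 a" and "c \<or> nt_fm1 b" and "c \<or> nt_fm1 e"
  shows "d1 c (F1 (Meet1 a (Join1 b e))) (F1 (Join1 (Meet1 a b) (Meet1 a e)))"
proof (rule d1_Meet1_Join1_distrib)
  have "c \<or> nt_fm1 (Meet1 a b)" and "c \<or> nt_fm1 (Meet1 a e)"
    using assms by auto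
  then show "d1 c (SMeet1 (F1 a) (F1 b)) (F1 (Join1 (Meet1 a b) (Meet1 a e)))"
    and "d1 c (SMeet1 (F1 a) (F1 e)) (F1 (Join1 (Meet1 a b) (Meet1 a e)))"
    using assms d1_SMeet1_Meet1
    by (meson d1_d2.cut1 d1_join_rightI1 d1_join_rightI2 d1_refl)+
qed

lemma d1_knowledge_distrib:
  assumes "c \<or> nt_fm1 a" and "c \<or> nt_fm1 b" and "c \<or> nt_fm1 e"
  shows "d1 c (F1 (Meet1 a (Join1 b e))) (F1 (Join1 (Meet1 a b) (Join1 a e)))"
proof (rule d1_Meet1_Join1_distrib)
  have "c \<or> nt_fm1 (Meet1 a b)" and "c \<or> nt_fm1 (Join1 a e)"
    using assms by auto
  then show "d1 c (SMeet1 (F1 a) (F1 b)) (F1 (Join1 (Meet1 a b) (Join1 a e)))"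
    using assms d1_SMeet1_Meet1 by (meson d1_d2.cut1 d1_join_rightI1 d1_refl)
  have "d1 c (F1 a) (F1 (Join1 (Meet1 a b) (Join1 a e)))"
    using assms \<open>c \<or> nt_fm1 (Meet1 a b)\<close> by (meson d1_join_rightI1 d1_join_rightI2 d1_refl)
  then show "d1 c (SMeet1 (F1 a) (F1 e)) (F1 (Join1 (Meet1 a b) (Join1 a e)))"
    using assms by (simp add: d1_d2.wL1 dlang1_def)
qed

lemma d1_Pf_mono: "d2 c (F2 x) (F2 y) \<Longrightarrow> d1 c (F1 (Pf x)) (F1 (Pf y))"
  by (intro d1_d2.pL d1_d2.pR d1_d2.mP_a)

lemma d1_Pf_Nf_left: "c \<or> nt_fm1 a \<Longrightarrow> d1 c (F1 (Pf (Nf a))) (F1 a)"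
  by (intro d1_d2.pL d1_d2.dp_PNb d1_d2.nL d1_d2.mN_a d1_refl)

lemma d1_Pf_Nf_right: "c \<or> nt_fm1 a \<Longrightarrow> d1 c (F1 a) (F1 (Pf (Nf a)))"
  by (intro d1_d2.pR d1_d2.dp_NPa d1_d2.nR d1_d2.mN_a d1_refl)

lemma d1_Pf_Zero2: "c \<or> nt_fm1 a \<Longrightarrow> d1 c (F1 (Pf Zero2)) (F1 a)"
  by (intro d1_d2.pL d1_d2.dp_PNb d2_zero_left) (simp add: dlang2_def)

lemma d1_Pf_One2: "c \<or> nt_fm1 a \<Longrightarrow> d1 c (F1 a) (F1 (Pf One2))"
  by (intro d1_d2.pR d1_d2.dp_NPa d2_one_right) (simp add: dlang2_def)

lemma d1_Pf_Join2_Join1: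
  assumes "c \<or> nt_fm2 x" and "c \<or> nt_fm2 y"
  shows "d1 c (F1 (Pf (Join2 x y))) (F1 (Join1 (Pf x) (Pf y)))"
proof -
  have P_Pf: "d1 c (SP (F2 z)) (F1 (Pf z))" if "c \<or> nt_fm2 z" for z
    using that by (intro d1_d2.pR d1_d2.mP_a d2_refl)
  have hx: "d1 c (SP (F2 x)) (F1 (Join1 (Pf x) (Pf y)))"
    using assms P_Pf by (meson d1_d2.cut1 d1_join_rightI1 d1_refl nt_fm1.simps(4))
  have hy: "d1 c (SP (F2 y)) (F1 (Join1 (Pf x) (Pf y)))"
    using assms P_Pf by (meson d1_d2.cut1 d1_join_rightI2 d1_refl nt_fm1.simps(4))
  show ?thesis
    by (intro d1_d2.pL d1_d2.dp_PNb d2_join_left d1_d2.dp_PNa[OF hx] d1_d2.dp_PNa[OF hy])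
qed

lemma d1_Meet1_Pf_Meet2:
  assumes "c \<or> nt_fm2 x" and "c \<or> nt_fm2 y"
  shows "d1 c (F1 (Meet1 (Pf x) (Pf y))) (F1 (Pf (Meet2 x y)))"
proof -
  have Pf_P: "d1 c (F1 (Pf z)) (SP (F2 z))" if "c \<or> nt_fm2 z" for z
    using that by (intro d1_d2.pL d1_d2.mP_a d2_refl)
  have hx: "d1 c (SMeet1 (F1 (Pf x)) (F1 (Pf y))) (SP (F2 x))"
    using assms by (simp add: d1_d2.wL1 dlang1_def Pf_P)
  have hy: "d1 c (SMeet1 (F1 (Pf x)) (F1 (Pf y))) (SP (F2 y))"
    using assms by (simp add: d1_d2.exL1 d1_d2.wL1 dlang1_def Pf_P)
  show ?thesis
    by (intro d1_d2.meetL1 d1_d2.pR d1_d2.dp_NPa d2_meet_right d1_d2.dp_NPb[OF hx] d1_d2.dp_NPb[OF hy])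
qed

lemma d1_Join1_Pf_Join2:
  "c \<or> nt_fm2 x \<Longrightarrow> c \<or> nt_fm2 y \<Longrightarrow> d1 c (F1 (Join1 (Pf x) (Pf y))) (F1 (Pf (Join2 x y)))"
  by (intro d1_join_left d1_Pf_mono d2_join_rightI1 d2_join_rightI2 d2_refl)

lemma d1_Pf_Meet2_Meet1:
  "c \<or> nt_fm2 x \<Longrightarrow> c \<or> nt_fm2 y \<Longrightarrow> d1 c (F1 (Pf (Meet2 x y))) (F1 (Meet1 (Pf x) (Pf y)))"
  by (intro d1_meet_right d1_Pf_mono d2_meet_leftI1 d2_meet_leftI2 d2_refl)

lemma d2_Tl2_antimono: "c \<Longrightarrow> d2 c (F2 x) (F2 y) \<Longrightarrow> d2 c (F2 (Tl2 y)) (F2 (Tl2 x))"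
  by (intro d1_d2.tlL2 d1_d2.tlR2 d1_d2.stC2a)

lemma d2_SStar2_Tl2: "c \<Longrightarrow> d2 c (SStar2 (F2 x)) (F2 (Tl2 x))"
  by (rule d1_d2.tlR2, assumption, rule d1_d2.stC2a, assumption, rule d2_refl) simp

lemma d2_Tl2_SStar2: "c \<Longrightarrow> d2 c (F2 (Tl2 x)) (SStar2 (F2 x))"
  by (rule d1_d2.tlL2, assumption, rule d1_d2.stC2a, assumption, rule d2_refl) simp

lemma d2_Tl2_Meet2_Join2:
  assumes c shows "d2 c (F2 (Tl2 (Meet2 x y))) (F2 (Join2 (Tl2 x) (Tl2 y)))"
proof -
  let ?J = "F2 (Join2 (Tl2 x) (Tl2 y))"
  have star_left: "d2 c (SStar2 ?J) (F2 z)" if "d2 c (F2 (Tl2 z)) ?J" for z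
    by (rule d1_d2.stL2a[OF assms d1_d2.cut2[OF d2_SStar2_Tl2[OF assms] that]])
  have "d2 c (SStar2 ?J) (F2 x)"
    using assms by (intro star_left d2_join_rightI1 d2_refl) simp_all
  moreover have "d2 c (SStar2 ?J) (F2 y)"
    using assms by (intro star_left d2_join_rightI2 d2_refl) simp_all
  ultimately show ?thesis
    by (rule d1_d2.tlL2[OF assms d1_d2.stL2a[OF assms d2_meet_right]])
qed

lemma d2_Meet2_Tl2_Join2:
  assumes c shows "d2 c (F2 (Meet2 (Tl2 x) (Tl2 y))) (F2 (Tl2 (Join2 x y)))"
proof -
  let ?M = "F2 (Meet2 (Tl2 x) (Tl2 y))"
  have star_right: "d2 c (F2 z) (SStar2 ?M)" if "d2 c ?M (F2 (Tl2 z))" for z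
    by (rule d1_d2.stR2a[OF assms d1_d2.cut2[OF that d2_Tl2_SStar2[OF assms]]])
  have "d2 c (F2 x) (SStar2 ?M)"
    using assms by (intro star_right d2_meet_leftI1 d2_refl) simp_all
  moreover have "d2 c (F2 y) (SStar2 ?M)"
    using assms by (intro star_right d2_meet_leftI2 d2_refl) simp_all
  ultimately show ?thesis
    by (rule d1_d2.tlR2[OF assms d1_d2.stR2a[OF assms d2_join_left]])
qed

lemma d1_Pf_Tl2_Join2_Meet1:
  "c \<Longrightarrow> d1 c (F1 (Pf (Tl2 (Join2 x y)))) (F1 (Meet1 (Pf (Tl2 x)) (Pf (Tl2 y))))"
  by (intro d1_meet_right d1_Pf_mono d2_Tl2_antimono d2_join_rightI1 d2_join_rightI2 d2_refl) auto

lemma d1_Meet1_Pf_Tl2_Join2: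
  "c \<Longrightarrow> d1 c (F1 (Meet1 (Pf (Tl2 x)) (Pf (Tl2 y)))) (F1 (Pf (Tl2 (Join2 x y))))"
  by (rule d1_d2.cut1[OF d1_Meet1_Pf_Meet2]) (auto intro: d1_Pf_mono d2_Meet2_Tl2_Join2)

lemma d1_Pf_Tl2_Meet2_Join1:
  "c \<Longrightarrow> d1 c (F1 (Pf (Tl2 (Meet2 x y)))) (F1 (Join1 (Pf (Tl2 x)) (Pf (Tl2 y))))"
  by (rule d1_d2.cut1[OF d1_Pf_mono[OF d2_Tl2_Meet2_Join2]]) (auto intro: d1_Pf_Join2_Join1)

lemma d1_Join1_Pf_Tl2_Meet2:
  "c \<Longrightarrow> d1 c (F1 (Join1 (Pf (Tl2 x)) (Pf (Tl2 y)))) (F1 (Pf (Tl2 (Meet2 x y))))"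
  by (intro d1_join_left d1_Pf_mono d2_Tl2_antimono d2_meet_leftI1 d2_meet_leftI2 d2_refl) auto

lemma d2_SStar2_Nf_Tl1: "c \<Longrightarrow> d2 c (SStar2 (SN (F1 a))) (F2 (Nf (Tl1 a)))"
  by (rule d1_d2.stNL, assumption, rule d1_d2.nR, rule d1_d2.mN_a, rule d1_d2.tlR1, assumption,
      rule d1_d2.stC1a, assumption, rule d1_refl) simp

lemma d2_Nf_Tl1_SStar2: "c \<Longrightarrow> d2 c (F2 (Nf (Tl1 a))) (SStar2 (SN (F1 a)))"
  by (rule d1_d2.stNR, assumption, rule d1_d2.nL, rule d1_d2.mN_a, rule d1_d2.tlL1, assumption,
      rule d1_d2.stC1a, assumption, rule d1_refl) simp

lemma d1_Pf_Tl2_Nf_Tl1_left: "c \<Longrightarrow> d1 c (F1 (Pf (Tl2 (Nf (Tl1 a))))) (F1 a)"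
  by (rule d1_d2.pL, rule d1_d2.dp_PNb, rule d1_d2.tlL2, assumption, rule d1_d2.stL2a, assumption,
      rule d2_SStar2_Nf_Tl1)

lemma d1_Pf_Tl2_Nf_Tl1_right: "c \<Longrightarrow> d1 c (F1 a) (F1 (Pf (Tl2 (Nf (Tl1 a)))))"
  by (rule d1_d2.pR, rule d1_d2.dp_NPa, rule d1_d2.tlR2, assumption, rule d1_d2.stR2a, assumption,
      rule d2_Nf_Tl1_SStar2)

lemma d2_Tl2_Nf: "c \<Longrightarrow> d2 c (F2 (Tl2 (Nf a))) (F2 (Nf (Tl1 a)))"
  by (rule d1_d2.tlL2, assumption, rule d1_d2.stL2a, assumption, rule d1_d2.nR,
      rule d1_d2.stL2a, assumption, rule d2_SStar2_Nf_Tl1)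

lemma d2_Nf_Tl1: "c \<Longrightarrow> d2 c (F2 (Nf (Tl1 a))) (F2 (Tl2 (Nf a)))"
  by (rule d1_d2.tlR2, assumption, rule d1_d2.stR2a, assumption, rule d1_d2.nL,
      rule d1_d2.stR2a, assumption, rule d2_Nf_Tl1_SStar2)

lemma d1_Pf_Tl2_One2: "c \<Longrightarrow> d1 c (F1 (Pf (Tl2 One2))) (F1 a)"
  by (rule d1_d2.pL, rule d1_d2.dp_PNb, rule d1_d2.tlL2, assumption, rule d1_d2.stL2a, assumption,
      rule d2_one_right) (simp add: dlang2_def)

lemma d1_Pf_Tl2_Zero2: "c \<Longrightarrow> d1 c (F1 a) (F1 (Pf (Tl2 Zero2)))"
  by (rule d1_d2.pR, rule d1_d2.dp_NPa, rule d1_d2.tlR2, assumption, rule d1_d2.stR2a, assumption,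
      rule d2_zero_left) (simp add: dlang2_def)

lemma deriv_imp_d1_t1: "deriv c A B \<Longrightarrow> d1 c (F1 (t1 A)) (F1 (t1 B))"
proof (induction rule: deriv.induct)
  case (cut A B C)
  from cut.IH show ?case by (rule d1_d2.cut1)
qed (simp_all add: lang_imp_nt_fm1_t1 lang_imp_nt_fm2_t2 d1_refl d1_zero_left d1_one_right
    dlang1_def d1_meet_right d1_join_left d1_meet_leftI1 d1_meet_leftI2 d1_join_rightI1
    d1_join_rightI2 d1_truth_distrib d1_knowledge_distrib d1_Pf_Nf_left d1_Pf_Nf_right
    d1_Pf_Zero2 d1_Pf_One2 d1_Pf_Join2_Join1 d1_Join1_Pf_Join2 d1_Pf_Meet2_Meet1
    d1_Meet1_Pf_Meet2 d1_Pf_Tl2_Join2_Meet1 d1_Meet1_Pf_Tl2_Join2 d1_Pf_Tl2_Meet2_Join1 d1_Join1_Pf_Tl2_Meet2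
    d1_Pf_Tl2_Nf_Tl1_left d1_Pf_Tl2_Nf_Tl1_right d1_Pf_Tl2_One2 d1_Pf_Tl2_Zero2 d1_Pf_mono d2_Tl2_Nf d2_Nf_Tl1)

theorem proposition2:
  shows "(\<forall>A B. no_conf A \<longrightarrow> no_conf B \<longrightarrow> BL_der A B \<longrightarrow> DBL1 (t1 A) (t1 B))
       \<and> (\<forall>A B. CBL_der A B \<longrightarrow> DCBL1 (t1 A) (t1 B))"
  using deriv_imp_d1_t1 by blast

end
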